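(* Let $R$ be a number ring. Assume that for every maximal ideal $\mathfrak p$ of $R$ we have $N(\mathfrak p^2)\leq N(\mathfrak p)^2$. Then $R$ is a Dedekind domain.
   Context: A number ring is a subring of a number field (a finite extension of $\mathbb{Q}$). For a non-zero ideal $I$ of $R$, $N(I)=[R:I]$ is its index as an additive subgroup. *)

theory Defs
  imports Complex_Main
begin

text \<open>All rings live inside an ambient field of characteristic 0 (type class field_char_0);
  a number field is a subfield that is finite-dimensional over the rationals, a number ring
  is a subring (with 1) of a number field.\<close>

definition is_subring :: "'a::field_char_0 set \<Rightarrow> bool" where
  "is_subring R \<longleftrightarrow> 1 \<in> R \<and> (\<forall>x\<in>R. \<forall>y\<in>R. x + y \<in> R \<and> x * y \<in> R) \<and> (\<forall>x\<in>R. - x \<in> R)"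

definition is_subfield :: "'a::field_char_0 set \<Rightarrow> bool" where
  "is_subfield K \<longleftrightarrow> is_subring K \<and> (\<forall>x\<in>K. x \<noteq> 0 \<longrightarrow> inverse x \<in> K)"

definition number_field :: "'a::field_char_0 set \<Rightarrow> bool" where
  "number_field K \<longleftrightarrow> is_subfield K \<and>
     (\<exists>B. finite B \<and> B \<subseteq> K \<and> K = {\<Sum>b\<in>B. of_rat (q b) * b | q. True})"

definition number_ring :: "'a::field_char_0 set \<Rightarrow> bool" where
  "number_ring R \<longleftrightarrow> is_subring R \<and> (\<exists>K. number_field K \<and> R \<subseteq> K)"

definition ideal_in :: "'a::field_char_0 set \<Rightarrow> 'a set \<Rightarrow> bool" where
  "ideal_in R I \<longleftrightarrow> I \<subseteq> R \<and> 0 \<in> I \<and> (\<forall>x\<in>I. \<forall>y\<in>I. x + y \<in> I) \<and> (\<forall>x\<in>I. - x \<in> I)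
      \<and> (\<forall>r\<in>R. \<forall>x\<in>I. r * x \<in> I)"

definition maximal_ideal_in :: "'a::field_char_0 set \<Rightarrow> 'a set \<Rightarrow> bool" where
  "maximal_ideal_in R P \<longleftrightarrow> ideal_in R P \<and> P \<noteq> R \<and>
     (\<forall>J. ideal_in R J \<and> P \<subseteq> J \<longrightarrow> J = P \<or> J = R)"

definition prime_ideal_in :: "'a::field_char_0 set \<Rightarrow> 'a set \<Rightarrow> bool" where
  "prime_ideal_in R P \<longleftrightarrow> ideal_in R P \<and> P \<noteq> R \<and>
     (\<forall>a\<in>R. \<forall>b\<in>R. a * b \<in> P \<longrightarrow> a \<in> P \<or> b \<in> P)"

definition ideal_gen :: "'a::field_char_0 set \<Rightarrow> 'a set \<Rightarrow> 'a set" where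
  "ideal_gen R S = \<Inter>{J. ideal_in R J \<and> S \<subseteq> J}"

definition ideal_prod :: "'a::field_char_0 set \<Rightarrow> 'a set \<Rightarrow> 'a set \<Rightarrow> 'a set" where
  "ideal_prod R I J = ideal_gen R {a * b | a b. a \<in> I \<and> b \<in> J}"

definition ideal_norm :: "'a::field_char_0 set \<Rightarrow> 'a set \<Rightarrow> nat" where
  "ideal_norm R I = card ((\<lambda>r. (\<lambda>x. r + x) ` I) ` R)"

definition noetherian_ring :: "'a::field_char_0 set \<Rightarrow> bool" where
  "noetherian_ring R \<longleftrightarrow> (\<forall>I. ideal_in R I \<longrightarrow> (\<exists>F. finite F \<and> F \<subseteq> I \<and> I = ideal_gen R F))"

definition integral_over :: "'a::field_char_0 set \<Rightarrow> 'a \<Rightarrow> bool" where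
  "integral_over R x \<longleftrightarrow> (\<exists>n::nat. \<exists>c. n \<ge> 1 \<and> (\<forall>i<n. c i \<in> R) \<and>
      x ^ n + (\<Sum>i<n. c i * x ^ i) = 0)"

definition integrally_closed :: "'a::field_char_0 set \<Rightarrow> bool" where
  "integrally_closed R \<longleftrightarrow> (\<forall>x. (\<exists>a\<in>R. \<exists>b\<in>R. b \<noteq> 0 \<and> x = a / b) \<and> integral_over R x \<longrightarrow> x \<in> R)"

text \<open>Dedekind domain: Noetherian integrally closed domain in which every nonzero prime ideal
  is maximal (being a domain is automatic for a subring of a field).\<close>
definition dedekind_domain :: "'a::field_char_0 set \<Rightarrow> bool" where
  "dedekind_domain R \<longleftrightarrow> is_subring R \<and> noetherian_ring R \<and> integrally_closed R \<and>
     (\<forall>P. prime_ideal_in R P \<and> P \<noteq> {0} \<longrightarrow> maximal_ideal_in R P)"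

end

(* A nonzero ideal I of a number ring R contains a positive integer m, because its nonzero
   elements are algebraic, and R/mR is finite, because every finitely generated subgroup of the
   ambient number field K is generated by at most [K:Q] elements.  So R/I is finite: nonzero
   primes are maximal, R is Noetherian, and only finitely many ideals contain I.

   Integral closedness is where the hypothesis enters.  If N(p^2) <= N(p)^2 for a maximal ideal p,
   then p = pi R + p^2 for some pi, since otherwise the cosets of t + u pi modulo p^2 (t, u running
   through representatives of R/p) and one further coset would give N(p^2) > N(p)^2.  By Nakayama's
   lemma p R_p = pi R_p, and every nonzero element of R is a power of pi times a unit of R_p.  An
   element x = a/b integral over R then lies in R_p: if b had the larger valuation, multiplying the
   integral equation of x by a suitable power of an element of p would put a unit of R_p into p.
   Hence the conductor {r. r x in R} lies in no maximal ideal, so it contains 1 and x is in R. *)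

theory Submission
  imports Defs "HOL-Library.FuncSet" "HOL-Computational_Algebra.Polynomial"
begin

interpretation zmodule: module "\<lambda>(k::int) (x::'a::field_char_0). of_int k * x"
  by standard (auto simp: algebra_simps)

interpretation qspace: vector_space "\<lambda>(q::rat) (x::'a::field_char_0). of_rat q * x"
  by standard (auto simp: algebra_simps of_rat_add of_rat_mult)


section \<open>Finitely generated subgroups of a finite-dimensional \<open>\<rat>\<close>-vector space\<close>

lemma rat_pair_int_span_cyclic:
  fixes r1 r2 :: rat
  obtains g s t a b where "g = of_int s * r1 + of_int t * r2" "r1 = of_int a * g" "r2 = of_int b * g"
proof -
  obtain a1 d1 where q1: "quotient_of r1 = (a1, d1)" by (cases "quotient_of r1")
  obtain a2 d2 where q2: "quotient_of r2 = (a2, d2)" by (cases "quotient_of r2")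
  have "d1 > 0" "d2 > 0" using q1 q2 quotient_of_denom_pos by blast+
  define A B D where "A = a1 * d2" and "B = a2 * d1" and "D = d1 * d2"
  have r1: "r1 = of_int A / of_int D" and r2: "r2 = of_int B / of_int D"
    using q1 q2 quotient_of_div \<open>d1 > 0\<close> \<open>d2 > 0\<close> by (auto simp: A_def B_def D_def)
  obtain s t where st: "s * A + t * B = gcd A B" using bezout_int by metis
  define g where "g = of_int (gcd A B) / (of_int D :: rat)"
  have "r1 = of_int (A div gcd A B) * g" "r2 = of_int (B div gcd A B) * g"
    by (simp_all add: r1 r2 g_def of_int_div)
  moreover have "g = of_int s * r1 + of_int t * r2"
    unfolding g_def r1 r2 st[symmetric] by (simp add: add_divide_distrib)
  ultimately show ?thesis using that by blast
qed

lemma rat_int_span_cyclic: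
  fixes f :: "'b \<Rightarrow> rat"
  assumes "finite X"
  shows "\<exists>h c z. h = (\<Sum>x\<in>X. of_int (c x) * f x) \<and> (\<forall>x\<in>X. f x = of_int (z x) * h)"
  using assms
proof (induction X rule: finite_induct)
  case empty
  show ?case by simp
next
  case (insert a X)
  then obtain h c z where h: "h = (\<Sum>x\<in>X. of_int (c x) * f x)" and z: "\<forall>x\<in>X. f x = of_int (z x) * h"
    by blast
  obtain g s t \<alpha> \<beta> where g: "g = of_int s * h + of_int t * f a" "h = of_int \<alpha> * g" "f a = of_int \<beta> * g"
    by (rule rat_pair_int_span_cyclic)
  define c' where "c' = (\<lambda>x. if x = a then t else s * c x)"
  define z' where "z' = (\<lambda>x. if x = a then \<beta> else z x * \<alpha>)"
  have "(\<Sum>x\<in>X. of_int (c' x) * f x) = (\<Sum>x\<in>X. of_int s * (of_int (c x) * f x))"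
    using insert.hyps(2) by (intro sum.cong) (auto simp: c'_def)
  then have "g = (\<Sum>x\<in>insert a X. of_int (c' x) * f x)"
    using insert.hyps by (simp add: c'_def g(1) h sum_distrib_left)
  moreover have "\<forall>x\<in>insert a X. f x = of_int (z' x) * g"
    using g z by (auto simp: z'_def)
  ultimately show ?case by blast
qed

lemma zmodule_span_eliminate_coordinate:
  fixes b :: "'a::field_char_0"
  assumes X: "finite X" "X \<subseteq> qspace.span (insert b B)"
  obtains w X' where "w \<in> zmodule.span X" "finite X'" "X' \<subseteq> qspace.span B"
    "X' \<subseteq> zmodule.span X" "X \<subseteq> zmodule.span (insert w X')"
proof -
  have "\<forall>x\<in>X. \<exists>k. x - of_rat k * b \<in> qspace.span B"
    using X(2) qspace.span_insert by blast
  then obtain q where q: "\<And>x. x \<in> X \<Longrightarrow> x - of_rat (q x) * b \<in> qspace.span B" by metis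
  obtain h c z where h: "h = (\<Sum>x\<in>X. of_int (c x) * q x)" and z: "\<forall>x\<in>X. q x = of_int (z x) * h"
    using rat_int_span_cyclic[OF X(1), of q] by blast
  define w where "w = (\<Sum>x\<in>X. of_int (c x) * x)"
  have wX: "w \<in> zmodule.span X" unfolding w_def
    by (intro zmodule.span_sum zmodule.span_scale zmodule.span_base)
  have "w - of_rat h * b = (\<Sum>x\<in>X. of_rat (of_int (c x)) * (x - of_rat (q x) * b))"
    by (simp add: w_def h of_rat_sum of_rat_mult sum_distrib_left sum_distrib_right algebra_simps
        sum_subtractf)
  also have "\<dots> \<in> qspace.span B"
    using q by (intro qspace.span_sum qspace.span_scale) blast
  finally have wB: "w - of_rat h * b \<in> qspace.span B" .
  \<comment> \<open>Subtracting multiples of \<open>w\<close> removes the \<open>b\<close>-coordinate of every element of \<open>X\<close>.\<close>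
  define X' where "X' = (\<lambda>x. x - of_int (z x) * w) ` X"
  have "x - of_int (z x) * w \<in> qspace.span B" if "x \<in> X" for x
  proof -
    have "x - of_int (z x) * w = (x - of_rat (q x) * b) - of_rat (of_int (z x)) * (w - of_rat h * b)"
      using z that by (simp add: algebra_simps of_rat_mult)
    also have "\<dots> \<in> qspace.span B"
      using q[OF that] wB by (rule qspace.span_diff[OF _ qspace.span_scale])
    finally show ?thesis .
  qed
  then have "X' \<subseteq> qspace.span B"
    by (auto simp: X'_def)
  moreover have "X' \<subseteq> zmodule.span X"
    using wX by (auto simp: X'_def intro: zmodule.span_diff[OF zmodule.span_base zmodule.span_scale])
  moreover have "X \<subseteq> zmodule.span (insert w X')"
  proof
    fix x assume x: "x \<in> X"
    have "x - of_int (z x) * w \<in> zmodule.span (insert w X')"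
      using x by (intro zmodule.span_base) (auto simp: X'_def)
    moreover have "of_int (z x) * w \<in> zmodule.span (insert w X')"
      by (intro zmodule.span_scale zmodule.span_base) auto
    ultimately show "x \<in> zmodule.span (insert w X')"
      using zmodule.span_add by fastforce
  qed
  moreover have "finite X'"
    using X(1) by (simp add: X'_def)
  ultimately show ?thesis
    using that wX by blast
qed

lemma zmodule_span_generators_bound:
  fixes B :: "'a::field_char_0 set"
  assumes "finite B" "finite X" "X \<subseteq> qspace.span B"
  shows "\<exists>Y. finite Y \<and> card Y \<le> card B \<and> Y \<subseteq> zmodule.span X \<and> X \<subseteq> zmodule.span Y"
  using assms
proof (induction B arbitrary: X rule: finite_induct)
  case empty
  then show ?case by (intro exI[of _ "{}"]) auto
next
  case (insert b B X)
  obtain w X' where w: "w \<in> zmodule.span X" and X': "finite X'" "X' \<subseteq> qspace.span B"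
    "X' \<subseteq> zmodule.span X" "X \<subseteq> zmodule.span (insert w X')"
    using zmodule_span_eliminate_coordinate[OF insert.prems] by blast
  obtain Y' where Y': "finite Y'" "card Y' \<le> card B" "Y' \<subseteq> zmodule.span X'" "X' \<subseteq> zmodule.span Y'"
    using insert.IH[OF X'(1,2)] by blast
  have "zmodule.span X' \<subseteq> zmodule.span X"
    using X'(3) zmodule.span_minimal[OF _ zmodule.subspace_span] by blast
  then have "insert w Y' \<subseteq> zmodule.span X"
    using Y'(3) w by blast
  moreover have "insert w X' \<subseteq> zmodule.span (insert w Y')"
    using Y'(4) zmodule.span_mono[of Y' "insert w Y'"] zmodule.span_base[of w "insert w Y'"] by blast
  then have "X \<subseteq> zmodule.span (insert w Y')"
    using X'(4) zmodule.span_minimal[OF _ zmodule.subspace_span] by blast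
  moreover have "card (insert w Y') \<le> card (insert b B)"
    using Y'(1,2) insert.hyps card_insert_le[of Y' w] by (simp add: card_insert_if)
  ultimately show ?case
    using Y'(1) by blast
qed

lemma subring_0: "is_subring R \<Longrightarrow> 0 \<in> R"
  unfolding is_subring_def by (metis add.right_inverse)

lemma subring_1: "is_subring R \<Longrightarrow> 1 \<in> R"
  and subring_add: "is_subring R \<Longrightarrow> x \<in> R \<Longrightarrow> y \<in> R \<Longrightarrow> x + y \<in> R"
  and subring_mult: "is_subring R \<Longrightarrow> x \<in> R \<Longrightarrow> y \<in> R \<Longrightarrow> x * y \<in> R"
  and subring_uminus: "is_subring R \<Longrightarrow> x \<in> R \<Longrightarrow> - x \<in> R"
  unfolding is_subring_def by blast+

lemma subring_diff: "is_subring R \<Longrightarrow> x \<in> R \<Longrightarrow> y \<in> R \<Longrightarrow> x - y \<in> R"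
  by (metis diff_conv_add_uminus subring_add subring_uminus)

lemma subring_power: "is_subring R \<Longrightarrow> x \<in> R \<Longrightarrow> x ^ n \<in> R"
  by (induction n) (auto simp: subring_1 subring_mult)

lemma subring_of_nat: "is_subring R \<Longrightarrow> of_nat n \<in> R"
  by (induction n) (auto simp: subring_0 subring_1 subring_add)

lemma subring_of_int: "is_subring R \<Longrightarrow> of_int k \<in> R"
  by (cases k rule: int_cases) (auto simp: subring_of_nat subring_uminus simp del: of_nat_Suc)

lemma subring_zmodule_subspace: "is_subring R \<Longrightarrow> zmodule.subspace R"
  by (rule zmodule.subspaceI) (auto simp: subring_0 subring_add subring_mult subring_of_int)

lemma subring_sum: "is_subring R \<Longrightarrow> (\<And>i. i \<in> A \<Longrightarrow> f i \<in> R) \<Longrightarrow> sum f A \<in> R"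
  using subring_zmodule_subspace zmodule.subspace_sum by metis

lemma subring_zmodule_span: "is_subring R \<Longrightarrow> S \<subseteq> R \<Longrightarrow> zmodule.span S \<subseteq> R"
  using subring_zmodule_subspace zmodule.span_minimal by metis

lemma subring_poly:
  assumes "is_subring R" "x \<in> R" "\<And>i. coeff p i \<in> R"
  shows "poly p x \<in> R"
  using assms by (auto simp: poly_altdef intro!: subring_sum subring_mult subring_power)

lemma number_ring_subring: "number_ring R \<Longrightarrow> is_subring R"
  unfolding number_ring_def by blast

lemma ideal_subset: "ideal_in R I \<Longrightarrow> I \<subseteq> R"
  and ideal_0: "ideal_in R I \<Longrightarrow> 0 \<in> I"
  and ideal_add: "ideal_in R I \<Longrightarrow> x \<in> I \<Longrightarrow> y \<in> I \<Longrightarrow> x + y \<in> I"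
  and ideal_uminus: "ideal_in R I \<Longrightarrow> x \<in> I \<Longrightarrow> - x \<in> I"
  and ideal_lmult: "ideal_in R I \<Longrightarrow> r \<in> R \<Longrightarrow> x \<in> I \<Longrightarrow> r * x \<in> I"
  unfolding ideal_in_def by blast+

lemma ideal_rmult: "ideal_in R I \<Longrightarrow> r \<in> R \<Longrightarrow> x \<in> I \<Longrightarrow> x * r \<in> I"
  by (metis ideal_lmult mult.commute)

lemma ideal_diff: "ideal_in R I \<Longrightarrow> x \<in> I \<Longrightarrow> y \<in> I \<Longrightarrow> x - y \<in> I"
  by (metis diff_conv_add_uminus ideal_add ideal_uminus)

lemma ideal_eq_if_one: "ideal_in R I \<Longrightarrow> 1 \<in> I \<Longrightarrow> I = R"
  using ideal_lmult[of R I _ 1] ideal_subset by fastforce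

lemma ideal_zero: "is_subring R \<Longrightarrow> ideal_in R {0}"
  unfolding ideal_in_def by (simp add: subring_0)

lemma ideal_self: "is_subring R \<Longrightarrow> ideal_in R R"
  unfolding ideal_in_def by (simp add: subring_0 subring_add subring_uminus subring_mult)

lemma ideal_lincomb:
  assumes R: "is_subring R" and I: "ideal_in R I" and J: "ideal_in R J" and g: "g \<in> R"
  shows "ideal_in R {i + j * g | i j. i \<in> I \<and> j \<in> J}" (is "ideal_in R ?L")
  unfolding ideal_in_def[of R ?L]
proof (intro conjI ballI)
  show "?L \<subseteq> R"
    using I J g by (auto intro!: subring_add[OF R] subring_mult[OF R] dest: ideal_subset)
  show "0 \<in> ?L"
    using I J by (force intro: ideal_0)
  fix x y assume "x \<in> ?L" and "y \<in> ?L"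
  then obtain i1 j1 i2 j2 where xy: "x = i1 + j1 * g" "y = i2 + j2 * g"
    and mem: "i1 \<in> I" "j1 \<in> J" "i2 \<in> I" "j2 \<in> J" by blast
  have "x + y = (i1 + i2) + (j1 + j2) * g" "- x = (- i1) + (- j1) * g"
    using xy by (simp_all add: algebra_simps)
  then show "x + y \<in> ?L" "- x \<in> ?L"
    using mem I J by (blast intro: ideal_add ideal_uminus)+
next
  fix r x assume r: "r \<in> R" and "x \<in> ?L"
  then obtain i j where "x = i + j * g" "i \<in> I" "j \<in> J" by blast
  moreover have "r * (i + j * g) = r * i + (r * j) * g"
    by (simp add: algebra_simps)
  ultimately show "r * x \<in> ?L"
    using r I J by (blast intro: ideal_lmult)
qed

lemma ideal_gen_ideal:
  assumes R: "is_subring R" and S: "S \<subseteq> R"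
  shows "ideal_in R (ideal_gen R S)"
proof -
  have "\<forall>J\<in>{J. ideal_in R J \<and> S \<subseteq> J}. ideal_in R J" "R \<in> {J. ideal_in R J \<and> S \<subseteq> J}"
    using ideal_self[OF R] S by auto
  then show ?thesis
    unfolding ideal_gen_def ideal_in_def[of R "\<Inter>_"]
    by (auto intro: ideal_0 ideal_add ideal_uminus ideal_lmult dest: ideal_subset)
qed

lemma ideal_gen_superset: "S \<subseteq> ideal_gen R S"
  unfolding ideal_gen_def by blast

lemma ideal_gen_minimal: "ideal_in R J \<Longrightarrow> S \<subseteq> J \<Longrightarrow> ideal_gen R S \<subseteq> J"
  unfolding ideal_gen_def by blast

lemma ideal_gen_mono: "S \<subseteq> T \<Longrightarrow> ideal_gen R S \<subseteq> ideal_gen R T"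
  unfolding ideal_gen_def by blast

lemma ideal_gen_ideal_eq: "ideal_in R J \<Longrightarrow> ideal_gen R J = J"
  using ideal_gen_superset ideal_gen_minimal by blast

lemma ideal_gen_insert:
  assumes R: "is_subring R" and S: "S \<subseteq> R" and g: "g \<in> R"
  shows "ideal_gen R (insert g S) = {m + r * g | m r. m \<in> ideal_gen R S \<and> r \<in> R}" (is "_ = ?L")
proof
  have "ideal_in R ?L"
    using ideal_lincomb[OF R ideal_gen_ideal[OF R S] ideal_self[OF R] g] .
  moreover have "insert g S \<subseteq> ?L"
  proof -
    have "g = 0 + 1 * g" "\<And>x. x = x + 0 * g" by simp_all
    then show ?thesis
      using ideal_0[OF ideal_gen_ideal[OF R S]] ideal_gen_superset[of S R] subring_0[OF R] subring_1[OF R]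
      by blast
  qed
  ultimately show "ideal_gen R (insert g S) \<subseteq> ?L"
    by (rule ideal_gen_minimal)
next
  have N: "ideal_in R (ideal_gen R (insert g S))"
    using ideal_gen_ideal[OF R] S g by blast
  have "ideal_gen R S \<subseteq> ideal_gen R (insert g S)" "g \<in> ideal_gen R (insert g S)"
    by (auto intro: ideal_gen_mono[THEN subsetD] ideal_gen_superset[THEN subsetD])
  then show "?L \<subseteq> ideal_gen R (insert g S)"
    using ideal_add[OF N] ideal_lmult[OF N] by blast
qed

lemma ideal_gen_insert_ideal_gen:
  assumes R: "is_subring R" and S: "S \<subseteq> R" and g: "g \<in> R"
  shows "ideal_gen R (insert g (ideal_gen R S)) = ideal_gen R (insert g S)"
proof
  have "insert g S \<subseteq> R"
    using S g by blast
  moreover have "insert g (ideal_gen R S) \<subseteq> ideal_gen R (insert g S)"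
    using ideal_gen_mono[of S "insert g S" R] ideal_gen_superset[of "insert g S" R] by blast
  ultimately show "ideal_gen R (insert g (ideal_gen R S)) \<subseteq> ideal_gen R (insert g S)"
    by (intro ideal_gen_minimal ideal_gen_ideal[OF R])
  show "ideal_gen R (insert g S) \<subseteq> ideal_gen R (insert g (ideal_gen R S))"
    by (rule ideal_gen_mono) (use ideal_gen_superset[of S R] in blast)
qed

definition principal_ideal :: "'a::field_char_0 set \<Rightarrow> 'a \<Rightarrow> 'a set" where
  "principal_ideal R a = {r * a | r. r \<in> R}"

lemma principal_ideal_ideal:
  assumes R: "is_subring R" and a: "a \<in> R"
  shows "ideal_in R (principal_ideal R a)"
proof -
  have "principal_ideal R a = {i + j * a | i j. i \<in> {0} \<and> j \<in> R}"
    by (auto simp: principal_ideal_def)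
  then show ?thesis
    using ideal_lincomb[OF R ideal_zero[OF R] ideal_self[OF R] a] by simp
qed

lemma principal_idealI: "r \<in> R \<Longrightarrow> r * a \<in> principal_ideal R a"
  unfolding principal_ideal_def by blast

lemma principal_ideal_power_antimono:
  assumes R: "is_subring R" and a: "a \<in> R" and "k \<le> l"
  shows "principal_ideal R (a ^ l) \<subseteq> principal_ideal R (a ^ k)"
proof
  fix z assume "z \<in> principal_ideal R (a ^ l)"
  then obtain r where r: "r \<in> R" "z = r * a ^ l"
    unfolding principal_ideal_def by blast
  then have "z = (r * a ^ (l - k)) * a ^ k"
    using \<open>k \<le> l\<close> by (simp add: mult.assoc flip: power_add)
  moreover have "r * a ^ (l - k) \<in> R"
    using subring_mult[OF R r(1) subring_power[OF R a]] .
  ultimately show "z \<in> principal_ideal R (a ^ k)"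
    using principal_idealI by metis
qed

lemma coset_eq_iff:
  assumes "ideal_in R I"
  shows "(+) x ` I = (+) y ` I \<longleftrightarrow> x - y \<in> I"
proof
  assume "(+) x ` I = (+) y ` I"
  moreover have "x \<in> (+) x ` I"
    using ideal_0[OF assms] by force
  ultimately show "x - y \<in> I" by auto
next
  assume d: "x - y \<in> I"
  have "(+) u ` I \<subseteq> (+) v ` I" if "u - v \<in> I" for u v
  proof
    fix z assume "z \<in> (+) u ` I"
    then obtain i where "i \<in> I" "z = v + ((u - v) + i)" by auto
    then show "z \<in> (+) v ` I"
      using ideal_add[OF assms that] by blast
  qed
  moreover have "y - x \<in> I"
    using ideal_uminus[OF assms d] by simp
  ultimately show "(+) x ` I = (+) y ` I"
    using d by blast
qed

section \<open>Finiteness of the residue rings\<close>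

lemma number_field_span:
  assumes "number_field K"
  obtains B where "finite B" "K = qspace.span B"
proof -
  obtain B where "finite B" "K = {\<Sum>b\<in>B. of_rat (q b) * b | q. True}"
    using assms unfolding number_field_def by blast
  then show ?thesis
    using that by (auto simp: qspace.span_finite)
qed

lemma number_field_subring: "number_field K \<Longrightarrow> is_subring K"
  unfolding number_field_def is_subfield_def by blast

lemma int_coordinates_pigeonhole:
  fixes u :: "'b \<Rightarrow> 'c \<Rightarrow> int"
  assumes Y: "finite Y" and m: "m > 0" and S: "card S > m ^ card Y"
  obtains x y d where "x \<in> S" "y \<in> S" "x \<noteq> y" "\<And>v. v \<in> Y \<Longrightarrow> u x v - u y v = int m * d v"
proof -
  define F where "F = (\<lambda>x. restrict (\<lambda>v. u x v mod int m) Y)"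
  have "F ` S \<subseteq> (\<Pi>\<^sub>E v\<in>Y. {0..<int m})"
    using m by (auto simp: F_def)
  moreover have "card (\<Pi>\<^sub>E v\<in>Y. {0..<int m}) = m ^ card Y" "finite (\<Pi>\<^sub>E v\<in>Y. {0..<int m})"
    using Y by (simp_all add: card_PiE finite_PiE)
  ultimately have "\<not> inj_on F S"
    using card_inj_on_le[of F S "\<Pi>\<^sub>E v\<in>Y. {0..<int m}"] S by linarith
  then obtain x y where xy: "x \<in> S" "y \<in> S" "x \<noteq> y" "F x = F y"
    unfolding inj_on_def by blast
  have "\<forall>v\<in>Y. int m dvd u x v - u y v"
  proof
    fix v assume "v \<in> Y"
    then show "int m dvd u x v - u y v"
      using fun_cong[OF xy(4), of v] by (simp add: F_def mod_eq_dvd_iff)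
  qed
  then show ?thesis
    using that xy(1-3) unfolding dvd_def by metis
qed

lemma exists_congruent_mod_int:
  fixes R :: "'a::field_char_0 set"
  assumes R: "is_subring R" and RB: "R \<subseteq> qspace.span B" and B: "finite B" and m: "m > 0"
    and S: "S \<subseteq> R" "finite S" "card S > m ^ card B"
  obtains x y r where "x \<in> S" "y \<in> S" "x \<noteq> y" "r \<in> R" "x - y = of_nat m * r"
proof -
  obtain Y where Y: "finite Y" "card Y \<le> card B" "Y \<subseteq> zmodule.span S" "S \<subseteq> zmodule.span Y"
    using zmodule_span_generators_bound[OF B S(2)] S(1) RB by (meson order_trans)
  have YR: "Y \<subseteq> R"
    using Y(3) subring_zmodule_span[OF R S(1)] by blast
  have "\<forall>x\<in>S. \<exists>c. x = (\<Sum>v\<in>Y. of_int (c v) * v)"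
    using Y(4) zmodule.span_finite[OF Y(1)] by blast
  then obtain u where u: "\<And>x. x \<in> S \<Longrightarrow> x = (\<Sum>v\<in>Y. of_int (u x v) * v)"
    by metis
  have "m ^ card Y \<le> m ^ card B"
    using Y(2) m by (simp add: power_increasing)
  then have "card S > m ^ card Y"
    using S(3) by linarith
  then obtain x y d where xy: "x \<in> S" "y \<in> S" "x \<noteq> y"
    and d: "\<And>v. v \<in> Y \<Longrightarrow> u x v - u y v = int m * d v"
    using int_coordinates_pigeonhole[OF Y(1) m, where u = u] by blast
  define r where "r = (\<Sum>v\<in>Y. of_int (d v) * v)"
  have "r \<in> R"
    unfolding r_def using YR by (intro subring_sum[OF R] subring_mult[OF R] subring_of_int[OF R]) auto
  moreover have "x - y = of_nat m * r"
  proof -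
    from u[OF xy(1)] u[OF xy(2)]
    have "x - y = (\<Sum>v\<in>Y. of_int (u x v) * v) - (\<Sum>v\<in>Y. of_int (u y v) * v)"
      by (rule arg_cong2[where f = minus])
    also have "\<dots> = (\<Sum>v\<in>Y. of_int (u x v - u y v) * v)"
      by (simp add: sum_subtractf left_diff_distrib)
    also have "\<dots> = (\<Sum>v\<in>Y. of_nat m * (of_int (d v) * v))"
      by (intro sum.cong) (simp_all add: d)
    finally show ?thesis
      by (simp add: r_def sum_distrib_left)
  qed
  ultimately show ?thesis
    using that xy by blast
qed

lemma number_ring_finite_cosets_if_int_mem:
  fixes R :: "'a::field_char_0 set"
  assumes NR: "number_ring R" and I: "ideal_in R I" and m: "m > 0" "of_nat m \<in> I"
  shows "finite ((\<lambda>r. (+) r ` I) ` R)"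
proof (rule ccontr)
  define f where "f = (\<lambda>r. (+) r ` I)"
  assume "infinite ((\<lambda>r. (+) r ` I) ` R)"
  obtain K B where K: "number_field K" "R \<subseteq> K" and B: "finite B" "K = qspace.span B"
    using NR number_field_span unfolding number_ring_def by metis
  obtain C where C: "finite C" "card C = Suc (m ^ card B)" "C \<subseteq> f ` R"
    using infinite_arbitrarily_large \<open>infinite _\<close> unfolding f_def by blast
  define S where "S = inv_into R f ` C"
  have S: "S \<subseteq> R" "finite S" "card S > m ^ card B"
    using C inj_on_inv_into[OF C(3)] inv_into_into[of _ f R]
    by (auto simp: S_def card_image)
  obtain x y r where xy: "x \<in> S" "y \<in> S" "x \<noteq> y" "r \<in> R" "x - y = of_nat m * r"
    using exists_congruent_mod_int[OF number_ring_subring[OF NR] _ B(1) m(1) S] K(2) B(2) by blast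
  have "x - y \<in> I"
    using ideal_lmult[OF I xy(4) m(2)] xy(5) by (simp add: mult.commute)
  then have "f x = f y"
    using coset_eq_iff[OF I] by (simp add: f_def)
  moreover have "inv_into R f (f z) = z" if "z \<in> S" for z
    using C(3) that by (auto simp: S_def f_inv_into_f)
  ultimately show False
    using xy(1-3) by metis
qed

lemma algebraic_if_rat_relation:
  fixes x :: "'a::field_char_0"
  assumes rel: "(\<Sum>i\<le>n. of_rat (c i) * x ^ i) = 0" and nontrivial: "i \<le> n" "c i \<noteq> 0"
  shows "algebraic x"
proof (rule algebraicI')
  define p where "p = (\<Sum>i\<le>n. monom (of_rat (c i) :: 'a) i)"
  have coeff_p: "coeff p k = (if k \<le> n then of_rat (c k) else 0)" for k
    by (simp add: p_def coeff_sum coeff_monom)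
  show "coeff p k \<in> \<rat>" for k
    by (simp add: coeff_p)
  show "p \<noteq> 0"
    using nontrivial coeff_p[of i] by auto
  show "poly p x = 0"
    using rel by (simp add: p_def poly_sum poly_monom)
qed

lemma number_field_algebraic:
  fixes x :: "'a::field_char_0"
  assumes K: "number_field K" and x: "x \<in> K"
  shows "algebraic x"
proof -
  obtain B where B: "finite B" "K = qspace.span B"
    using number_field_span[OF K] by blast
  let ?d = "card B"
  show ?thesis
  proof (cases "inj_on (\<lambda>i. x ^ i) {..?d}")
    case False
    then obtain i j where ij: "i < j" "x ^ i = x ^ j"
      unfolding inj_on_def by (metis linorder_neqE_nat)
    show ?thesis
    proof (rule algebraicI')
      show "coeff (monom 1 j - monom 1 i) k \<in> \<rat>" for k
        by (auto simp: coeff_monom)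
      show "monom 1 j - monom 1 i \<noteq> (0 :: 'a poly)"
        using ij(1) by (metis coeff_diff coeff_monom diff_zero less_irrefl one_neq_zero coeff_0)
      show "poly (monom 1 j - monom 1 i) x = 0"
        using ij(2) by (simp add: poly_monom)
    qed
  next
    case True
    define X where "X = (\<lambda>i. x ^ i) ` {..?d}"
    have "X \<subseteq> qspace.span B"
      using subring_power[OF number_field_subring[OF K] x] B(2) by (auto simp: X_def)
    moreover have "card X = Suc ?d"
      using True by (simp add: X_def card_image)
    ultimately have "qspace.dependent X"
      using qspace.independent_span_bound[OF B(1), of X] by linarith
    then obtain u where u: "\<exists>v\<in>X. u v \<noteq> 0" "(\<Sum>v\<in>X. of_rat (u v) * v) = 0"
      using qspace.dependent_finite[of X] by (auto simp: X_def)
    obtain i where "i \<le> ?d" "u (x ^ i) \<noteq> 0"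
      using u(1) by (auto simp: X_def)
    moreover have "(\<Sum>i\<le>?d. of_rat (u (x ^ i)) * x ^ i) = 0"
      using u(2) True by (simp add: X_def sum.reindex)
    ultimately show ?thesis
      by (intro algebraic_if_rat_relation[where n = ?d and c = "\<lambda>i. u (x ^ i)"])
  qed
qed

text \<open>The constant term of an integer relation of \<open>x\<close> lies in every ideal containing \<open>x\<close>.\<close>
lemma ideal_int_mem_if_algebraic:
  assumes R: "is_subring R" and I: "ideal_in R I" and x: "x \<in> I" "x \<noteq> 0" "algebraic x"
  obtains m :: nat where "m > 0" "of_nat m \<in> I"
proof -
  obtain p where p: "coeff p 0 \<noteq> 0" "poly (map_poly of_int p) x = 0"
    using algebraicE'_nonzero[OF x(3,2)] by blast
  obtain k p' where k: "p = pCons k p'"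
    by (rule pCons_cases)
  have "poly (map_poly of_int p') x \<in> R"
    using x(1) ideal_subset[OF I] by (intro subring_poly[OF R]) (auto simp: coeff_map_poly subring_of_int[OF R])
  then have "- (x * poly (map_poly of_int p') x) \<in> I"
    using I x(1) by (intro ideal_uminus ideal_rmult)
  moreover have "of_int k = - (x * poly (map_poly of_int p') x)"
    using p(2) by (simp add: k map_poly_pCons eq_neg_iff_add_eq_0)
  ultimately have "of_int k \<in> I" "of_int (- k) \<in> I"
    using ideal_uminus[OF I] by fastforce+
  then have "of_nat (nat \<bar>k\<bar>) \<in> I"
    by (cases "k \<ge> 0") simp_all
  moreover have "nat \<bar>k\<bar> > 0"
    using p(1) k by simp
  ultimately show ?thesis
    using that by blast
qed

lemma number_ring_ideal_int_mem:
  assumes NR: "number_ring R" and I: "ideal_in R I" "I \<noteq> {0}"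
  obtains m :: nat where "m > 0" "of_nat m \<in> I"
proof -
  obtain x where x: "x \<in> I" "x \<noteq> 0"
    using I ideal_0 by blast
  obtain K where "number_field K" "R \<subseteq> K"
    using NR unfolding number_ring_def by blast
  then have "algebraic x"
    using number_field_algebraic x(1) ideal_subset[OF I(1)] by blast
  then show ?thesis
    using ideal_int_mem_if_algebraic[OF number_ring_subring[OF NR] I(1) x] that by blast
qed

lemma number_ring_finite_cosets:
  assumes NR: "number_ring R" and I: "ideal_in R I" "I \<noteq> {0}"
  shows "finite ((\<lambda>r. (+) r ` I) ` R)"
  using number_ring_ideal_int_mem[OF assms] number_ring_finite_cosets_if_int_mem[OF NR I(1)] by metis

lemma finite_range_repeats:
  fixes f :: "nat \<Rightarrow> 'b"
  assumes "finite (range f)"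
  obtains i j where "i < j" "f i = f j"
  using assms by (metis finite_imageD infinite_UNIV_nat inj_on_def linorder_neqE_nat)

lemma number_ring_finite_ideals_above:
  assumes NR: "number_ring R" and I: "ideal_in R I" "I \<noteq> {0}"
  shows "finite {J. ideal_in R J \<and> I \<subseteq> J}"
proof -
  define \<phi> where "\<phi> = (\<lambda>J. (\<lambda>r. (+) r ` I) ` J)"
  have "J = \<Union>(\<phi> J)" if "ideal_in R J" "I \<subseteq> J" for J
  proof
    show "J \<subseteq> \<Union>(\<phi> J)"
      using ideal_0[OF I(1)] by (force simp: \<phi>_def)
    show "\<Union>(\<phi> J) \<subseteq> J"
      using that ideal_add by (fastforce simp: \<phi>_def)
  qed
  then have "inj_on \<phi> {J. ideal_in R J \<and> I \<subseteq> J}"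
    by (metis (mono_tags, lifting) inj_onI mem_Collect_eq)
  moreover have "\<phi> ` {J. ideal_in R J \<and> I \<subseteq> J} \<subseteq> Pow ((\<lambda>r. (+) r ` I) ` R)"
    unfolding \<phi>_def using ideal_subset by blast
  then have "finite (\<phi> ` {J. ideal_in R J \<and> I \<subseteq> J})"
    using number_ring_finite_cosets[OF NR I] by (meson finite_Pow_iff finite_subset)
  ultimately show ?thesis
    using finite_imageD by blast
qed

lemma number_ring_maximal_ideal_above:
  assumes NR: "number_ring R" and I: "ideal_in R I" "I \<noteq> {0}" "I \<noteq> R"
  obtains P where "maximal_ideal_in R P" "I \<subseteq> P"
proof -
  define F where "F = {J. ideal_in R J \<and> I \<subseteq> J \<and> J \<noteq> R}"
  have "F \<subseteq> {J. ideal_in R J \<and> I \<subseteq> J}"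
    by (auto simp: F_def)
  then have "finite F"
    by (rule finite_subset) (rule number_ring_finite_ideals_above[OF NR I(1,2)])
  moreover have "F \<noteq> {}"
    using I by (auto simp: F_def)
  ultimately obtain P where P: "P \<in> F" "\<And>J. J \<in> F \<Longrightarrow> P \<subseteq> J \<Longrightarrow> P = J"
    by (metis finite_has_maximal)
  have "maximal_ideal_in R P"
    unfolding maximal_ideal_in_def
  proof (intro conjI allI impI)
    show "ideal_in R P" "P \<noteq> R"
      using P(1) by (simp_all add: F_def)
    fix J assume J: "ideal_in R J \<and> P \<subseteq> J"
    show "J = P \<or> J = R"
    proof (cases "J = R")
      case False
      then have "J \<in> F"
        using J P(1) by (auto simp: F_def)
      then show ?thesis
        using P(2) J by blast
    qed simp
  qed
  then show ?thesis
    using that P(1) by (simp add: F_def)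
qed

lemma ideal_finitely_generated_if_finite_cosets:
  assumes R: "is_subring R" and I: "ideal_in R I" and c: "c \<in> I"
    and fin: "finite ((\<lambda>r. (+) r ` principal_ideal R c) ` R)"
  obtains F where "finite F" "F \<subseteq> I" "I = ideal_gen R F"
proof -
  define M where "M = principal_ideal R c"
  define f where "f = (\<lambda>r. (+) r ` M)"
  have M: "ideal_in R M"
    unfolding M_def using principal_ideal_ideal[OF R] c ideal_subset[OF I] by blast
  have "f ` I \<subseteq> f ` R"
    using ideal_subset[OF I] by (rule image_mono)
  then have "finite (f ` I)"
    using fin unfolding f_def M_def by (rule finite_subset)
  then obtain F0 where F0: "F0 \<subseteq> I" "finite F0" "f ` I = f ` F0"
    using finite_subset_image[OF _ subset_refl, where f = f and A = I] by blast
  define F where "F = insert c F0"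
  have FI: "F \<subseteq> I"
    using F0(1) c by (simp add: F_def)
  have G: "ideal_in R (ideal_gen R F)"
    using ideal_gen_ideal[OF R] FI ideal_subset[OF I] by blast
  have "I \<subseteq> ideal_gen R F"
  proof
    fix y assume "y \<in> I"
    then have "f y \<in> f ` F0"
      using F0(3) by blast
    then obtain t where t: "t \<in> F0" "f y = f t"
      by blast
    then have "y - t \<in> M"
      using coset_eq_iff[OF M] by (simp add: f_def)
    then obtain r where r: "r \<in> R" "y - t = r * c"
      by (auto simp: M_def principal_ideal_def)
    have "t \<in> ideal_gen R F" "c \<in> ideal_gen R F"
      using t(1) ideal_gen_superset[of F R] by (auto simp: F_def)
    then have "t + r * c \<in> ideal_gen R F"
      using r(1) ideal_add[OF G] ideal_lmult[OF G] by blast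
    moreover have "y = t + r * c"
      using r(2) by (simp add: algebra_simps)
    ultimately show "y \<in> ideal_gen R F"
      by simp
  qed
  then have "I = ideal_gen R F"
    using ideal_gen_minimal[OF I FI] by blast
  moreover have "finite F"
    using F0(2) by (simp add: F_def)
  ultimately show ?thesis
    using that FI by blast
qed

lemma number_ring_noetherian:
  assumes NR: "number_ring R"
  shows "noetherian_ring R"
  unfolding noetherian_ring_def
proof (intro allI impI)
  have R: "is_subring R"
    using NR by (rule number_ring_subring)
  fix I assume I: "ideal_in R I"
  show "\<exists>F. finite F \<and> F \<subseteq> I \<and> I = ideal_gen R F"
  proof (cases "I = {0}")
    case True
    have "ideal_gen R {} = {0}"
      using ideal_gen_minimal[OF ideal_zero[OF R], of "{}"] ideal_0[OF ideal_gen_ideal[OF R, of "{}"]]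
      by blast
    then show ?thesis
      using True by (intro exI[of _ "{}"]) simp
  next
    case False
    obtain m :: nat where m: "m > 0" "of_nat m \<in> I"
      using number_ring_ideal_int_mem[OF NR I False] by blast
    have "ideal_in R (principal_ideal R (of_nat m))"
      using principal_ideal_ideal[OF R subring_of_nat[OF R]] .
    moreover have "of_nat m \<in> principal_ideal R (of_nat m)"
      using principal_idealI[OF subring_1[OF R]] by fastforce
    ultimately have "finite ((\<lambda>r. (+) r ` principal_ideal R (of_nat m)) ` R)"
      using number_ring_finite_cosets[OF NR] m(1) by (metis of_nat_eq_0_iff singletonD not_less_zero)
    then obtain F where "finite F" "F \<subseteq> I" "I = ideal_gen R F"
      using ideal_finitely_generated_if_finite_cosets[OF R I m(2)] by blast
    then show ?thesis
      by blast
  qed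
qed

lemma maximal_ideal_ideal: "maximal_ideal_in R P \<Longrightarrow> ideal_in R P"
  unfolding maximal_ideal_in_def by blast

lemma prime_ideal_ideal: "prime_ideal_in R P \<Longrightarrow> ideal_in R P"
  unfolding prime_ideal_in_def by blast

lemma prime_ideal_one_notin: "prime_ideal_in R P \<Longrightarrow> 1 \<notin> P"
  unfolding prime_ideal_in_def using ideal_eq_if_one by blast

lemma prime_ideal_mult_notin:
  "prime_ideal_in R P \<Longrightarrow> a \<in> R \<Longrightarrow> b \<in> R \<Longrightarrow> a \<notin> P \<Longrightarrow> b \<notin> P \<Longrightarrow> a * b \<notin> P"
  unfolding prime_ideal_in_def by blast

lemma prime_ideal_power_notin:
  assumes "is_subring R" "prime_ideal_in R P" "a \<in> R" "a \<notin> P"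
  shows "a ^ n \<notin> P"
  using assms
  by (induction n) (auto simp: prime_ideal_one_notin prime_ideal_mult_notin subring_power)

lemma maximal_ideal_unit_mod:
  assumes R: "is_subring R" and P: "maximal_ideal_in R P" and v: "v \<in> R" "v \<notin> P"
  obtains q r where "q \<in> P" "r \<in> R" "1 = q + r * v"
proof -
  define L where "L = {q + r * v | q r. q \<in> P \<and> r \<in> R}"
  have PI: "ideal_in R P"
    using P by (rule maximal_ideal_ideal)
  have L: "ideal_in R L"
    unfolding L_def using ideal_lincomb[OF R PI ideal_self[OF R] v(1)] .
  have "q \<in> L" if "q \<in> P" for q
  proof -
    have "q = q + 0 * v" by simp
    then show ?thesis
      unfolding L_def using that subring_0[OF R] by blast
  qed
  moreover have "v \<in> L"
  proof -
    have "v = 0 + 1 * v" by simp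
    then show ?thesis
      unfolding L_def using ideal_0[OF PI] subring_1[OF R] by blast
  qed
  ultimately have "L = R"
    using P L v(2) unfolding maximal_ideal_in_def by (metis subsetI)
  then have "1 \<in> L"
    using subring_1[OF R] by simp
  then show ?thesis
    using that unfolding L_def by blast
qed

lemma maximal_ideal_prime:
  assumes R: "is_subring R" and P: "maximal_ideal_in R P"
  shows "prime_ideal_in R P"
  unfolding prime_ideal_in_def
proof (intro conjI ballI impI)
  show PI: "ideal_in R P" and "P \<noteq> R"
    using P unfolding maximal_ideal_in_def by blast+
  fix a b assume ab: "a \<in> R" "b \<in> R" "a * b \<in> P"
  show "a \<in> P \<or> b \<in> P"
  proof (cases "a \<in> P")
    case False
    then obtain q r where qr: "q \<in> P" "r \<in> R" "1 = q + r * a"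
      using maximal_ideal_unit_mod[OF R P ab(1)] by blast
    then have "b = q * b + r * (a * b)"
      by (metis mult.assoc mult_1 distrib_right)
    moreover have "q * b + r * (a * b) \<in> P"
      using ideal_add[OF PI ideal_rmult[OF PI ab(2) qr(1)] ideal_lmult[OF PI qr(2) ab(3)]] .
    ultimately show ?thesis
      by simp
  qed simp
qed

lemma number_ring_prime_ideal_maximal:
  assumes NR: "number_ring R" and P: "prime_ideal_in R P" "P \<noteq> {0}"
  shows "maximal_ideal_in R P"
  unfolding maximal_ideal_in_def
proof (intro conjI allI impI)
  have R: "is_subring R" and PI: "ideal_in R P"
    using NR P(1) by (simp_all add: number_ring_subring prime_ideal_ideal)
  show "ideal_in R P" "P \<noteq> R"
    using P unfolding prime_ideal_in_def by blast+
  fix J assume "ideal_in R J \<and> P \<subseteq> J"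
  then have J: "ideal_in R J" "P \<subseteq> J" by blast+
  show "J = P \<or> J = R"
  proof (cases "J = P")
    case False
    then obtain a where a: "a \<in> J" "a \<notin> P" "a \<in> R"
      using J ideal_subset by blast
    \<comment> \<open>\<open>R/P\<close> is a finite domain, so \<open>a\<close> has a multiplicative inverse modulo \<open>P\<close>.\<close>
    have "range (\<lambda>k. (+) (a ^ k) ` P) \<subseteq> (\<lambda>r. (+) r ` P) ` R"
      using subring_power[OF R a(3)] by blast
    then have "finite (range (\<lambda>k. (+) (a ^ k) ` P))"
      using number_ring_finite_cosets[OF NR PI P(2)] by (rule finite_subset)
    then obtain i j where ij: "i < j" "(+) (a ^ i) ` P = (+) (a ^ j) ` P"
      by (rule finite_range_repeats)
    then obtain d where d: "j = Suc (i + d)"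
      using less_imp_Suc_add by blast
    have aR: "a ^ i \<in> R" "a ^ Suc d \<in> R" "1 - a ^ Suc d \<in> R"
      using subring_power[OF R a(3)] subring_diff[OF R subring_1[OF R]] by blast+
    have "a ^ i * (1 - a ^ Suc d) = a ^ i - a ^ j"
      by (simp add: d algebra_simps power_add)
    then have "a ^ i * (1 - a ^ Suc d) \<in> P"
      using ij(2) coset_eq_iff[OF PI] by simp
    then have "1 - a ^ Suc d \<in> J"
      using prime_ideal_mult_notin[OF P(1) aR(1,3)] prime_ideal_power_notin[OF R P(1) a(3,2)] J(2)
      by blast
    moreover have "a ^ Suc d \<in> J"
      using ideal_lmult[OF J(1) subring_power[OF R a(3)] a(1), of d] by (simp only: power_Suc2)
    ultimately have "(1 - a ^ Suc d) + a ^ Suc d \<in> J"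
      by (rule ideal_add[OF J(1)])
    then show ?thesis
      using ideal_eq_if_one[OF J(1)] by simp
  qed simp
qed

section \<open>The norm of the square of a maximal ideal\<close>

lemma ideal_prod_ideal:
  assumes R: "is_subring R" and I: "ideal_in R I" and J: "ideal_in R J"
  shows "ideal_in R (ideal_prod R I J)"
proof -
  have "{a * b | a b. a \<in> I \<and> b \<in> J} \<subseteq> R"
    using ideal_subset[OF I] ideal_subset[OF J] by (auto intro: subring_mult[OF R])
  then show ?thesis
    unfolding ideal_prod_def by (rule ideal_gen_ideal[OF R])
qed

lemma ideal_prod_mult_mem: "a \<in> I \<Longrightarrow> b \<in> J \<Longrightarrow> a * b \<in> ideal_prod R I J"
  unfolding ideal_prod_def by (rule ideal_gen_superset[THEN subsetD]) blast

lemma ideal_prod_subset: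
  assumes I: "ideal_in R I" and J: "ideal_in R J"
  shows "ideal_prod R I J \<subseteq> I"
  unfolding ideal_prod_def
  by (rule ideal_gen_minimal[OF I]) (use ideal_rmult[OF I] ideal_subset[OF J] in blast)

lemma maximal_ideal_mem_if_mult_mem_square:
  assumes R: "is_subring R" and P: "maximal_ideal_in R P"
    and \<pi>: "\<pi> \<in> P" "\<pi> \<notin> ideal_prod R P P" and v: "v \<in> R" "v * \<pi> \<in> ideal_prod R P P"
  shows "v \<in> P"
proof (rule ccontr)
  have P2: "ideal_in R (ideal_prod R P P)"
    using ideal_prod_ideal[OF R] maximal_ideal_ideal[OF P] by blast
  assume "v \<notin> P"
  then obtain q r where qr: "q \<in> P" "r \<in> R" "1 = q + r * v"
    using maximal_ideal_unit_mod[OF R P v(1)] by blast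
  have "\<pi> = (q + r * v) * \<pi>"
    by (simp flip: qr(3))
  then have "\<pi> = q * \<pi> + r * (v * \<pi>)"
    by (simp add: algebra_simps)
  moreover have "q * \<pi> + r * (v * \<pi>) \<in> ideal_prod R P P"
    using ideal_add[OF P2 ideal_prod_mult_mem[OF qr(1) \<pi>(1)] ideal_lmult[OF P2 qr(2) v(2)]] .
  ultimately show False
    using \<pi>(2) by simp
qed

lemma ideal_transversal:
  assumes R: "is_subring R" and I: "ideal_in R I"
  obtains T where "T \<subseteq> R" "0 \<in> T" "card T = ideal_norm R I"
    "\<And>t t'. t \<in> T \<Longrightarrow> t' \<in> T \<Longrightarrow> t - t' \<in> I \<Longrightarrow> t = t'"
proof -
  define f where "f = (\<lambda>r. (+) r ` I)"
  define rep where "rep = (\<lambda>c. if c = I then 0 else inv_into R f c)"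
  have rep: "rep c \<in> R \<and> f (rep c) = c" if "c \<in> f ` R" for c
  proof (cases "c = I")
    case True
    then show ?thesis
      by (simp add: rep_def f_def subring_0[OF R])
  next
    case False
    then show ?thesis
      using that by (simp add: rep_def inv_into_into f_inv_into_f)
  qed
  let ?T = "rep ` f ` R"
  have "inj_on rep (f ` R)"
    by (metis inj_onI rep)
  then have "card ?T = ideal_norm R I"
    by (simp add: card_image ideal_norm_def f_def)
  moreover have "0 \<in> ?T"
  proof -
    have "f 0 = I" "rep I = 0"
      by (simp_all add: f_def rep_def)
    then show ?thesis
      using subring_0[OF R] by (metis image_eqI)
  qed
  moreover have "t = t'" if tt': "t \<in> ?T" "t' \<in> ?T" "t - t' \<in> I" for t t'
  proof -
    obtain c c' where "c \<in> f ` R" "c' \<in> f ` R" "t = rep c" "t' = rep c'"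
      using tt'(1,2) by blast
    moreover have "f t = f t'"
      using tt'(3) coset_eq_iff[OF I] by (simp add: f_def)
    ultimately show ?thesis
      using rep by metis
  qed
  moreover have "?T \<subseteq> R"
    using rep by blast
  ultimately show ?thesis
    using that by blast
qed

lemma ideal_norm_ge_card:
  assumes I: "ideal_in R I" and fin: "finite ((\<lambda>r. (+) r ` I) ` R)" and S: "S \<subseteq> R"
    and incongruent: "\<And>x y. x \<in> S \<Longrightarrow> y \<in> S \<Longrightarrow> x - y \<in> I \<Longrightarrow> x = y"
  shows "card S \<le> ideal_norm R I"
proof -
  have "inj_on (\<lambda>r. (+) r ` I) S"
    using incongruent coset_eq_iff[OF I] by (intro inj_onI) blast
  moreover have "(\<lambda>r. (+) r ` I) ` S \<subseteq> (\<lambda>r. (+) r ` I) ` R"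
    using S by (rule image_mono)
  ultimately show ?thesis
    unfolding ideal_norm_def using fin by (rule card_inj_on_le)
qed

lemma maximal_ideal_transversal_lincomb_inj:
  assumes R: "is_subring R" and P: "maximal_ideal_in R P"
    and \<pi>: "\<pi> \<in> P" "\<pi> \<notin> ideal_prod R P P"
    and T: "T \<subseteq> R" "\<And>t t'. t \<in> T \<Longrightarrow> t' \<in> T \<Longrightarrow> t - t' \<in> P \<Longrightarrow> t = t'"
    and tu: "t \<in> T" "u \<in> T" "t' \<in> T" "u' \<in> T"
    and diff: "(t + u * \<pi>) - (t' + u' * \<pi>) \<in> ideal_prod R P P"
  shows "t = t' \<and> u = u'"
proof -
  have PI: "ideal_in R P"
    using P by (rule maximal_ideal_ideal)
  have uR: "u - u' \<in> R"
    using tu(2,4) T(1) subring_diff[OF R] by blast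
  have "(u - u') * \<pi> \<in> P"
    using ideal_lmult[OF PI uR \<pi>(1)] by (simp add: mult.commute)
  moreover have "(t + u * \<pi>) - (t' + u' * \<pi>) \<in> P"
    using diff ideal_prod_subset[OF PI PI] by blast
  ultimately have "((t + u * \<pi>) - (t' + u' * \<pi>)) - (u - u') * \<pi> \<in> P"
    by (rule ideal_diff[OF PI, rotated])
  then have "t = t'"
    using T(2)[OF tu(1,3)] by (simp add: algebra_simps)
  then have "(u - u') * \<pi> \<in> ideal_prod R P P"
    using diff by (simp add: algebra_simps)
  then have "u - u' \<in> P"
    using maximal_ideal_mem_if_mult_mem_square[OF R P \<pi> uR] by blast
  then show ?thesis
    using T(2)[OF tu(2,4)] \<open>t = t'\<close> by blast
qed

lemma transversal_lincomb_congruent_mem_ideal_gen: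
  assumes R: "is_subring R" and P: "ideal_in R P" and \<pi>: "\<pi> \<in> P"
    and T: "T \<subseteq> R" "0 \<in> T" "\<And>t t'. t \<in> T \<Longrightarrow> t' \<in> T \<Longrightarrow> t - t' \<in> P \<Longrightarrow> t = t'"
    and tu: "t \<in> T" "u \<in> T" and y: "y \<in> P" "y - (t + u * \<pi>) \<in> ideal_prod R P P"
  shows "y \<in> ideal_gen R (insert \<pi> (ideal_prod R P P))"
proof -
  have P2: "ideal_in R (ideal_prod R P P)"
    using ideal_prod_ideal[OF R P P] .
  have uR: "u \<in> R"
    using tu(2) T(1) by blast
  have "y - (y - (t + u * \<pi>)) - u * \<pi> \<in> P"
    using ideal_lmult[OF P uR \<pi>] y ideal_prod_subset[OF P P] ideal_diff[OF P] by blast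
  then have "t = 0"
    using T(3)[OF tu(1) T(2)] by simp
  let ?G = "ideal_gen R (insert \<pi> (ideal_prod R P P))"
  have G: "ideal_in R ?G"
    using ideal_gen_ideal[OF R] ideal_subset[OF P2] ideal_subset[OF P] \<pi> by blast
  have "y - u * \<pi> \<in> ?G" "\<pi> \<in> ?G"
    using y(2) \<open>t = 0\<close> ideal_gen_superset[of "insert \<pi> (ideal_prod R P P)" R] by auto
  then have "(y - u * \<pi>) + u * \<pi> \<in> ?G"
    using ideal_add[OF G] ideal_lmult[OF G uR] by blast
  then show ?thesis
    by simp
qed

text \<open>If \<open>P \<noteq> \<pi>R + P\<^sup>2\<close>, the elements \<open>t + u\<pi>\<close>, with \<open>t, u\<close> running through a transversal of \<open>P\<close>,
  together with some \<open>y \<in> P - (\<pi>R + P\<^sup>2)\<close>, are pairwise incongruent modulo \<open>P\<^sup>2\<close>.\<close>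
lemma ideal_norm_square_gt:
  assumes NR: "number_ring R" and P: "maximal_ideal_in R P"
    and \<pi>: "\<pi> \<in> P" "\<pi> \<notin> ideal_prod R P P"
    and y: "y \<in> P" "y \<notin> ideal_gen R (insert \<pi> (ideal_prod R P P))"
  shows "ideal_norm R P ^ 2 < ideal_norm R (ideal_prod R P P)"
proof -
  have R: "is_subring R" and PI: "ideal_in R P"
    using NR P by (simp_all add: number_ring_subring maximal_ideal_ideal)
  have P2I: "ideal_in R (ideal_prod R P P)"
    using ideal_prod_ideal[OF R PI PI] .
  have "\<pi> \<noteq> 0" "\<pi> * \<pi> \<in> ideal_prod R P P"
    using \<pi> ideal_0[OF P2I] ideal_prod_mult_mem by auto
  then have fin: "finite ((\<lambda>r. (+) r ` ideal_prod R P P) ` R)"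
    using number_ring_finite_cosets[OF NR P2I] by force
  have "ideal_norm R P > 0"
    using number_ring_finite_cosets[OF NR PI] \<pi>(1) \<open>\<pi> \<noteq> 0\<close> subring_0[OF R]
    by (auto simp: ideal_norm_def card_gt_0_iff)
  obtain T where T: "T \<subseteq> R" "0 \<in> T" "card T = ideal_norm R P"
    and T_incongruent: "\<And>t t'. t \<in> T \<Longrightarrow> t' \<in> T \<Longrightarrow> t - t' \<in> P \<Longrightarrow> t = t'"
    using ideal_transversal[OF R PI] by blast
  have "finite T"
    using T(3) \<open>ideal_norm R P > 0\<close> by (simp add: card_ge_0_finite)
  define f where "f = (\<lambda>(t, u). t + u * \<pi>)"
  have f_inj: "z = z'" if "z \<in> T \<times> T" "z' \<in> T \<times> T" "f z - f z' \<in> ideal_prod R P P" for z z'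
    using that maximal_ideal_transversal_lincomb_inj[OF R P \<pi> T(1) T_incongruent] by (auto simp: f_def)
  have y_notin: "y - f z \<notin> ideal_prod R P P" if "z \<in> T \<times> T" for z
    using that y transversal_lincomb_congruent_mem_ideal_gen[OF R PI \<pi>(1) T(1,2) T_incongruent]
    by (auto simp: f_def)
  have "inj_on f (T \<times> T)"
    using f_inj ideal_0[OF P2I] by (intro inj_onI) simp
  moreover have "y \<notin> f ` (T \<times> T)"
    using y_notin ideal_0[OF P2I] by (metis diff_self imageE)
  ultimately have "card (insert y (f ` (T \<times> T))) = Suc (ideal_norm R P ^ 2)"
    using \<open>finite T\<close> T(3) by (simp add: card_image card_cartesian_product power2_eq_square)
  moreover have "card (insert y (f ` (T \<times> T))) \<le> ideal_norm R (ideal_prod R P P)"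
  proof (rule ideal_norm_ge_card[OF P2I fin])
    show "insert y (f ` (T \<times> T)) \<subseteq> R"
      using T(1) y(1) ideal_subset[OF PI] \<pi>(1)
      by (auto simp: f_def intro!: subring_add[OF R] subring_mult[OF R])
    show "a = b" if "a \<in> insert y (f ` (T \<times> T))" "b \<in> insert y (f ` (T \<times> T))"
      "a - b \<in> ideal_prod R P P" for a b
      using that f_inj y_notin ideal_uminus[OF P2I, of "a - b"] by auto
  qed
  ultimately show ?thesis
    by simp
qed

lemma maximal_ideal_principal_mod_square:
  assumes NR: "number_ring R" and P: "maximal_ideal_in R P" "P \<noteq> {0}"
    and norm: "ideal_norm R (ideal_prod R P P) \<le> ideal_norm R P ^ 2"
  obtains \<pi> where "\<pi> \<in> P" "\<pi> \<noteq> 0" "P \<subseteq> ideal_gen R (insert \<pi> (ideal_prod R P P))"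
proof (cases "P \<subseteq> ideal_prod R P P")
  case True
  obtain x where "x \<in> P" "x \<noteq> 0"
    using P(2) ideal_0[OF maximal_ideal_ideal[OF P(1)]] by blast
  moreover have "P \<subseteq> ideal_gen R (insert x (ideal_prod R P P))"
    using True ideal_gen_superset by blast
  ultimately show ?thesis
    using that by blast
next
  case False
  then obtain \<pi> where \<pi>: "\<pi> \<in> P" "\<pi> \<notin> ideal_prod R P P"
    by blast
  have PI: "ideal_in R P"
    using P(1) by (rule maximal_ideal_ideal)
  have "0 \<in> ideal_prod R P P"
    using ideal_0[OF ideal_prod_ideal[OF number_ring_subring[OF NR] PI PI]] .
  then have "\<pi> \<noteq> 0"
    using \<pi>(2) by auto
  moreover have "P \<subseteq> ideal_gen R (insert \<pi> (ideal_prod R P P))"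
  proof
    fix y assume "y \<in> P"
    show "y \<in> ideal_gen R (insert \<pi> (ideal_prod R P P))"
    proof (rule ccontr)
      assume "y \<notin> ideal_gen R (insert \<pi> (ideal_prod R P P))"
      then show False
        using ideal_norm_square_gt[OF NR P(1) \<pi> \<open>y \<in> P\<close>] norm by simp
    qed
  qed
  ultimately show ?thesis
    using that \<pi>(1) by blast
qed

section \<open>Localization at a maximal ideal\<close>

text \<open>\<open>saturation R p J\<close> is \<open>J R\<^sub>p \<inter> R\<close>; it lets us argue in the localization \<open>R\<^sub>p\<close> without constructing it.\<close>
definition saturation :: "'a::field_char_0 set \<Rightarrow> 'a set \<Rightarrow> 'a set \<Rightarrow> 'a set" where
  "saturation R p J = {x \<in> R. \<exists>s\<in>R. s \<notin> p \<and> s * x \<in> J}"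

lemma saturation_ideal:
  assumes R: "is_subring R" and p: "prime_ideal_in R p" and J: "ideal_in R J"
  shows "ideal_in R (saturation R p J)"
  unfolding ideal_in_def[of R "saturation R p J"]
proof (intro conjI ballI)
  show "saturation R p J \<subseteq> R"
    unfolding saturation_def by blast
  show "0 \<in> saturation R p J"
    unfolding saturation_def
    using ideal_0[OF J] subring_0[OF R] subring_1[OF R] prime_ideal_one_notin[OF p] by force
  fix x y assume "x \<in> saturation R p J" "y \<in> saturation R p J"
  then obtain s1 s2 where s: "s1 \<in> R" "s1 \<notin> p" "s1 * x \<in> J" "s2 \<in> R" "s2 \<notin> p" "s2 * y \<in> J"
    and xy: "x \<in> R" "y \<in> R"
    unfolding saturation_def by blast
  have "(s1 * s2) * (x + y) = s2 * (s1 * x) + s1 * (s2 * y)"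
    by (simp add: algebra_simps)
  also have "\<dots> \<in> J"
    using s ideal_add[OF J] ideal_lmult[OF J] by blast
  finally have "(s1 * s2) * (x + y) \<in> J" .
  moreover have "s1 * s2 \<in> R" "s1 * s2 \<notin> p"
    using s subring_mult[OF R] prime_ideal_mult_notin[OF p] by auto
  moreover have "x + y \<in> R"
    using xy subring_add[OF R] by blast
  ultimately show "x + y \<in> saturation R p J"
    unfolding saturation_def by blast
  have "s1 * (- x) \<in> J"
    using ideal_uminus[OF J s(3)] by simp
  then show "- x \<in> saturation R p J"
    unfolding saturation_def using s(1,2) xy(1) subring_uminus[OF R] by blast
next
  fix r x assume r: "r \<in> R" and "x \<in> saturation R p J"
  then obtain s where s: "s \<in> R" "s \<notin> p" "s * x \<in> J" "x \<in> R"
    unfolding saturation_def by blast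
  have "s * (r * x) \<in> J"
    using ideal_lmult[OF J r s(3)] by (simp add: mult.left_commute)
  then show "r * x \<in> saturation R p J"
    unfolding saturation_def using s r subring_mult[OF R] by blast
qed

lemma saturation_superset:
  assumes R: "is_subring R" and p: "prime_ideal_in R p" and J: "J \<subseteq> R"
  shows "J \<subseteq> saturation R p J"
  unfolding saturation_def using J subring_1[OF R] prime_ideal_one_notin[OF p] by force

lemma saturation_idem:
  assumes R: "is_subring R" and p: "prime_ideal_in R p"
  shows "saturation R p (saturation R p J) \<subseteq> saturation R p J"
proof
  fix x assume "x \<in> saturation R p (saturation R p J)"
  then obtain s1 s2 where s: "x \<in> R" "s1 \<in> R" "s1 \<notin> p" "s2 \<in> R" "s2 \<notin> p" "s2 * (s1 * x) \<in> J"
    unfolding saturation_def by blast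
  have "(s2 * s1) * x \<in> J"
    using s(6) by (simp add: mult.assoc)
  moreover have "s2 * s1 \<in> R" "s2 * s1 \<notin> p"
    using s subring_mult[OF R] prime_ideal_mult_notin[OF p] by auto
  ultimately show "x \<in> saturation R p J"
    unfolding saturation_def using s(1) by blast
qed

lemma saturation_mono: "J \<subseteq> J' \<Longrightarrow> saturation R p J \<subseteq> saturation R p J'"
  unfolding saturation_def by blast

lemma square_subset_saturation_lincomb:
  assumes R: "is_subring R" and p: "prime_ideal_in R p" and N: "ideal_in R N" and g: "g \<in> p"
    and gen: "p \<subseteq> saturation R p (ideal_gen R (insert g N))"
  shows "ideal_prod R p p \<subseteq> saturation R p {n + c * g | n c. n \<in> N \<and> c \<in> p}"
    (is "_ \<subseteq> saturation R p ?Z")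
proof -
  have pI: "ideal_in R p"
    using p by (rule prime_ideal_ideal)
  have gR: "g \<in> R"
    using g ideal_subset[OF pI] by blast
  have "ideal_in R (saturation R p ?Z)"
    using saturation_ideal[OF R p ideal_lincomb[OF R N pI gR]] .
  then show ?thesis
    unfolding ideal_prod_def
  proof (rule ideal_gen_minimal, safe)
    fix a b assume ab: "a \<in> p" "b \<in> p"
    have "ideal_gen R (insert g N) = {n + r * g | n r. n \<in> N \<and> r \<in> R}"
      using ideal_gen_insert[OF R ideal_subset[OF N] gR] ideal_gen_ideal_eq[OF N] by simp
    moreover have "b \<in> saturation R p (ideal_gen R (insert g N))"
      using gen ab(2) by blast
    ultimately have "b \<in> saturation R p {n + r * g | n r. n \<in> N \<and> r \<in> R}"
      by simp
    then obtain s where s: "s \<in> R" "s \<notin> p" "s * b \<in> {n + r * g | n r. n \<in> N \<and> r \<in> R}"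
      unfolding saturation_def by blast
    then obtain n r where nr: "s * b = n + r * g" "n \<in> N" "r \<in> R"
      by blast
    have aR: "a \<in> R"
      using ab(1) ideal_subset[OF pI] by blast
    have "s * (a * b) = a * (s * b)"
      by (simp add: algebra_simps)
    also have "\<dots> = a * n + (a * r) * g"
      by (simp only: nr(1) distrib_left mult.assoc)
    finally have "s * (a * b) = a * n + (a * r) * g" .
    moreover have "a * n \<in> N" "a * r \<in> p"
      using ideal_lmult[OF N aR nr(2)] ideal_rmult[OF pI nr(3) ab(1)] .
    ultimately have "s * (a * b) \<in> ?Z"
      by blast
    moreover have "a * b \<in> R"
      using aR ab(2) ideal_subset[OF pI] subring_mult[OF R] by blast
    ultimately show "a * b \<in> saturation R p ?Z"
      unfolding saturation_def using s(1,2) by blast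
  qed
qed

text \<open>Nakayama's lemma in \<open>R\<^sub>p\<close>, one generator at a time: a generator \<open>g\<close> that is redundant
  modulo \<open>p\<^sup>2\<close> can be dropped.\<close>
lemma saturation_drop_generator:
  assumes R: "is_subring R" and p: "prime_ideal_in R p" and N: "ideal_in R N" and g: "g \<in> p"
    and gen: "p \<subseteq> saturation R p (ideal_gen R (insert g N))"
    and g_mod: "g \<in> saturation R p (ideal_gen R (N \<union> ideal_prod R p p))"
  shows "p \<subseteq> saturation R p N"
proof -
  have pI: "ideal_in R p"
    using p by (rule prime_ideal_ideal)
  have gR: "g \<in> R" and NR: "N \<subseteq> R"
    using g ideal_subset[OF pI] ideal_subset[OF N] by blast+
  define Z where "Z = {n + c * g | n c. n \<in> N \<and> c \<in> p}"
  have Z: "ideal_in R Z"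
    unfolding Z_def using ideal_lincomb[OF R N pI gR] .
  have "n \<in> Z" if "n \<in> N" for n
  proof -
    have "n = n + 0 * g" by simp
    then show ?thesis
      unfolding Z_def using that ideal_0[OF pI] by blast
  qed
  then have "N \<subseteq> saturation R p Z"
    using saturation_superset[OF R p] ideal_subset[OF Z] by blast
  moreover have "ideal_prod R p p \<subseteq> saturation R p Z"
    unfolding Z_def using square_subset_saturation_lincomb[OF R p N g gen] .
  ultimately have "ideal_gen R (N \<union> ideal_prod R p p) \<subseteq> saturation R p Z"
    using ideal_gen_minimal[OF saturation_ideal[OF R p Z]] by blast
  then have "g \<in> saturation R p Z"
    using g_mod saturation_mono[of _ "saturation R p Z" R p] saturation_idem[OF R p] by blast
  then obtain s n c where s: "s \<in> R" "s \<notin> p" "s * g = n + c * g" "n \<in> N" "c \<in> p"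
    unfolding saturation_def Z_def by blast
  \<comment> \<open>\<open>s - c\<close> is a unit of \<open>R\<^sub>p\<close> with \<open>(s - c) g \<in> N\<close>.\<close>
  have "(s - c) * g \<in> N"
    using s(3,4) by (simp add: algebra_simps)
  moreover have "s - c \<in> R"
    using s(1,5) ideal_subset[OF pI] subring_diff[OF R] by blast
  moreover have "s - c \<notin> p"
    using s(2,5) ideal_add[OF pI, of "s - c" c] by auto
  ultimately have "g \<in> saturation R p N"
    unfolding saturation_def using gR by blast
  then have "ideal_gen R (insert g N) \<subseteq> saturation R p N"
    using saturation_superset[OF R p NR] ideal_gen_minimal[OF saturation_ideal[OF R p N]] by blast
  then show ?thesis
    using gen saturation_mono[of _ "saturation R p N" R p] saturation_idem[OF R p] by blast
qed

lemma saturation_drop_generators: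
  assumes R: "is_subring R" and p: "prime_ideal_in R p" and Q: "ideal_in R Q" "\<pi> \<in> Q"
    and mod_square: "p \<subseteq> ideal_gen R (insert \<pi> (ideal_prod R p p))"
    and F: "finite F" "F \<subseteq> p" and gen: "p \<subseteq> saturation R p (ideal_gen R (Q \<union> F))"
  shows "p \<subseteq> saturation R p Q"
  using F gen
proof (induction F rule: finite_induct)
  case empty
  then show ?case
    using ideal_gen_ideal_eq[OF Q(1)] by simp
next
  case (insert g G)
  have pI: "ideal_in R p"
    using p by (rule prime_ideal_ideal)
  define N where "N = ideal_gen R (Q \<union> G)"
  have QG: "Q \<union> G \<subseteq> R"
    using ideal_subset[OF Q(1)] ideal_subset[OF pI] insert.prems(1) by blast
  have N: "ideal_in R N"
    unfolding N_def using ideal_gen_ideal[OF R QG] .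
  have g: "g \<in> p" "g \<in> R"
    using insert.prems(1) ideal_subset[OF pI] by auto
  have "ideal_gen R (insert g N) = ideal_gen R (Q \<union> insert g G)"
    unfolding N_def using ideal_gen_insert_ideal_gen[OF R QG g(2)] by simp
  then have gen: "p \<subseteq> saturation R p (ideal_gen R (insert g N))"
    using insert.prems(2) by simp
  have "insert \<pi> (ideal_prod R p p) \<subseteq> N \<union> ideal_prod R p p"
    using Q(2) ideal_gen_superset[of "Q \<union> G" R] by (auto simp: N_def)
  then have "g \<in> ideal_gen R (N \<union> ideal_prod R p p)"
    using mod_square g(1) ideal_gen_mono by blast
  moreover have "N \<union> ideal_prod R p p \<subseteq> R"
    using ideal_subset[OF N] ideal_subset[OF ideal_prod_ideal[OF R pI pI]] by blast
  ultimately have "g \<in> saturation R p (ideal_gen R (N \<union> ideal_prod R p p))"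
    using saturation_superset[OF R p ideal_subset[OF ideal_gen_ideal[OF R]]] by blast
  then have "p \<subseteq> saturation R p N"
    using saturation_drop_generator[OF R p N g(1) gen] by blast
  then show ?case
    using insert.IH insert.prems(1) by (simp add: N_def)
qed

lemma saturation_principal_if_principal_mod_square:
  assumes NR: "number_ring R" and p: "maximal_ideal_in R p" and \<pi>: "\<pi> \<in> p"
    and mod_square: "p \<subseteq> ideal_gen R (insert \<pi> (ideal_prod R p p))"
  shows "p \<subseteq> saturation R p (principal_ideal R \<pi>)"
proof -
  have R: "is_subring R" and pI: "ideal_in R p" and pp: "prime_ideal_in R p"
    using NR p by (simp_all add: number_ring_subring maximal_ideal_ideal maximal_ideal_prime)
  have \<pi>R: "\<pi> \<in> R"
    using ideal_subset[OF pI] \<pi> by auto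
  define Q where "Q = principal_ideal R \<pi>"
  have Q: "ideal_in R Q" "\<pi> \<in> Q"
    unfolding Q_def using principal_ideal_ideal[OF R \<pi>R] principal_idealI[OF subring_1[OF R], of \<pi>]
    by simp_all
  obtain F where F: "finite F" "F \<subseteq> p" "p = ideal_gen R F"
    using number_ring_noetherian[OF NR] pI unfolding noetherian_ring_def by blast
  have QF: "Q \<union> F \<subseteq> R"
    using ideal_subset[OF Q(1)] F(2) ideal_subset[OF pI] by blast
  have "p \<subseteq> ideal_gen R (Q \<union> F)"
    using F(3) ideal_gen_mono[of F "Q \<union> F" R] by blast
  also have "\<dots> \<subseteq> saturation R p (ideal_gen R (Q \<union> F))"
    using saturation_superset[OF R pp ideal_subset[OF ideal_gen_ideal[OF R QF]]] .
  finally show ?thesis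
    using saturation_drop_generators[OF R pp Q mod_square F(1,2)] by (simp add: Q_def)
qed

text \<open>The ideals \<open>\<pi>\<^sup>k R\<^sub>p \<inter> R\<close> strictly decrease, while only finitely many ideals contain \<open>a\<close>.\<close>
lemma saturation_principal_power_notin:
  assumes NR: "number_ring R" and p: "prime_ideal_in R p" and \<pi>: "\<pi> \<in> p" "\<pi> \<noteq> 0"
    and a: "a \<in> R" "a \<noteq> 0"
  obtains k where "a \<notin> saturation R p (principal_ideal R (\<pi> ^ k))"
proof (rule ccontr)
  have R: "is_subring R" and pI: "ideal_in R p"
    using NR p by (simp_all add: number_ring_subring prime_ideal_ideal)
  have \<pi>R: "\<pi> \<in> R"
    using \<pi>(1) ideal_subset[OF pI] by blast
  define V where "V k = saturation R p (principal_ideal R (\<pi> ^ k))" for k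
  have VI: "ideal_in R (V k)" for k
    unfolding V_def using saturation_ideal[OF R p principal_ideal_ideal[OF R subring_power[OF R \<pi>R]]] .
  assume "\<not> thesis"
  then have "a \<in> V k" for k
    using that by (auto simp: V_def)
  then have "principal_ideal R a \<subseteq> V k" for k
    unfolding principal_ideal_def using ideal_lmult[OF VI] by blast
  then have "range V \<subseteq> {J. ideal_in R J \<and> principal_ideal R a \<subseteq> J}"
    using VI by blast
  moreover have aI: "ideal_in R (principal_ideal R a)" "principal_ideal R a \<noteq> {0}"
    using principal_ideal_ideal[OF R a(1)] principal_idealI[OF subring_1[OF R], of a] a(2) by auto
  ultimately have "finite (range V)"
    using number_ring_finite_ideals_above[OF NR aI] finite_subset by blast
  then obtain i j where "i < j" "V i = V j"
    by (rule finite_range_repeats)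
  moreover have "\<pi> ^ i \<in> V i"
    unfolding V_def
    using saturation_superset[OF R p ideal_subset[OF principal_ideal_ideal[OF R subring_power[OF R \<pi>R]]]]
      principal_idealI[OF subring_1[OF R], of "\<pi> ^ i"] by auto
  moreover have "V j \<subseteq> V (Suc i)"
    using \<open>i < j\<close> unfolding V_def
    by (intro saturation_mono principal_ideal_power_antimono[OF R \<pi>R]) simp
  ultimately obtain s r where s: "s \<in> R" "s \<notin> p" "r \<in> R" "s * \<pi> ^ i = r * \<pi> ^ Suc i"
    unfolding V_def saturation_def principal_ideal_def by blast
  then have "s = r * \<pi>"
    using \<pi>(2) by (simp add: mult.commute mult.left_commute)
  then show False
    using s(2) ideal_lmult[OF pI s(3) \<pi>(1)] by simp
qed

lemma saturation_valuation:
  assumes NR: "number_ring R" and p: "prime_ideal_in R p" and \<pi>: "\<pi> \<in> p" "\<pi> \<noteq> 0"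
    and loc: "p \<subseteq> saturation R p (principal_ideal R \<pi>)" and a: "a \<in> R" "a \<noteq> 0"
  obtains k r s where "r \<in> R" "s \<in> R" "r \<notin> p" "s \<notin> p" "s * a = \<pi> ^ k * r"
proof -
  have R: "is_subring R"
    using NR by (rule number_ring_subring)
  define V where "V k = saturation R p (principal_ideal R (\<pi> ^ k))" for k
  have "a \<in> V 0"
    using saturation_superset[OF R p ideal_subset[OF principal_ideal_ideal[OF R subring_1[OF R]]]]
      principal_idealI[OF a(1), of 1] by (auto simp: V_def)
  moreover obtain k where "a \<notin> V k"
    using saturation_principal_power_notin[OF NR p \<pi> a] unfolding V_def by blast
  ultimately obtain j where j: "a \<in> V j" "a \<notin> V (Suc j)"
    using ex_least_nat_less[of "\<lambda>k. a \<notin> V k"] by blast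
  then obtain s r where s: "s \<in> R" "s \<notin> p" "r \<in> R" "s * a = r * \<pi> ^ j"
    unfolding V_def saturation_def principal_ideal_def by blast
  have "r \<notin> p"
  proof
    assume "r \<in> p"
    then obtain s' r' where s': "s' \<in> R" "s' \<notin> p" "r' \<in> R" "s' * r = r' * \<pi>"
      using loc unfolding saturation_def principal_ideal_def by blast
    have "(s' * s) * a = s' * (s * a)"
      by (simp only: mult.assoc)
    also have "\<dots> = (s' * r) * \<pi> ^ j"
      by (simp only: s(4) mult.assoc)
    also have "\<dots> = r' * \<pi> ^ Suc j"
      by (simp only: s'(4) power_Suc mult.assoc)
    finally have "(s' * s) * a = r' * \<pi> ^ Suc j" .
    moreover have "s' * s \<in> R" "s' * s \<notin> p"
      using s s' subring_mult[OF R] prime_ideal_mult_notin[OF p] by auto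
    ultimately have "a \<in> V (Suc j)"
      unfolding V_def saturation_def principal_ideal_def using a(1) s'(3) by blast
    then show False
      using j(2) by blast
  qed
  then show ?thesis
    using that[of r s j] s by (simp add: mult.commute)
qed

section \<open>Integral closedness\<close>

text \<open>An element integral over \<open>R\<close> has no denominator in a prime \<open>p\<close>: multiplying its integral
  equation by \<open>w\<^sup>n\<close> shows \<open>(x w)\<^sup>n \<in> w R\<close>.\<close>
lemma integral_over_mult_mem_prime:
  assumes R: "is_subring R" and p: "prime_ideal_in R p" and x: "integral_over R x"
    and w: "w \<in> p" and xw: "x * w \<in> R"
  shows "x * w \<in> p"
proof -
  have pI: "ideal_in R p"
    using p by (rule prime_ideal_ideal)
  have wR: "w \<in> R"
    using w ideal_subset[OF pI] by blast
  obtain n c where c: "\<forall>i<n. c i \<in> R" and eq: "x ^ n + (\<Sum>i<n. c i * x ^ i) = 0"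
    using x unfolding integral_over_def by blast
  define t where "t = x * w"
  have scaled_term: "w ^ n * (c i * x ^ i) = w * (c i * t ^ i * w ^ (n - Suc i))" if "i < n" for i
  proof -
    have "w ^ n = w ^ i * (w * w ^ (n - Suc i))"
      using that by (simp flip: power_add power_Suc)
    then show ?thesis
      by (simp add: t_def algebra_simps)
  qed
  define W where "W = (\<Sum>i<n. c i * t ^ i * w ^ (n - Suc i))"
  have "W \<in> R"
    unfolding W_def using c xw wR
    by (intro subring_sum[OF R]) (simp add: t_def subring_mult[OF R] subring_power[OF R])
  have "0 = w ^ n * (x ^ n + (\<Sum>i<n. c i * x ^ i))"
    using eq by simp
  also have "\<dots> = t ^ n + (\<Sum>i<n. w ^ n * (c i * x ^ i))"
    by (simp add: t_def algebra_simps power_mult_distrib sum_distrib_left)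
  also have "\<dots> = t ^ n + (\<Sum>i<n. w * (c i * t ^ i * w ^ (n - Suc i)))"
    using scaled_term by (auto intro!: sum.cong)
  also have "\<dots> = t ^ n + w * W"
    by (simp add: W_def sum_distrib_left)
  finally have "t ^ n = - (W * w)"
    by (simp add: algebra_simps eq_neg_iff_add_eq_0)
  moreover have "- (W * w) \<in> p"
    using ideal_uminus[OF pI ideal_lmult[OF pI \<open>W \<in> R\<close> w]] .
  ultimately show ?thesis
    using prime_ideal_power_notin[OF R p] xw unfolding t_def by metis
qed

text \<open>An element integral over \<open>R\<close> cannot have a larger \<open>\<pi>\<close>-valuation in the denominator.\<close>
lemma integral_over_valuation_le:
  assumes R: "is_subring R" and p: "prime_ideal_in R p" and \<pi>: "\<pi> \<in> p" "\<pi> \<noteq> 0"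
    and x: "integral_over R x" and tu: "t \<in> R" "u \<in> R" "u \<notin> p"
    and eq: "t * x * \<pi> ^ j = u * \<pi> ^ i"
  shows "j \<le> i"
proof (rule ccontr)
  have pI: "ideal_in R p"
    using p by (rule prime_ideal_ideal)
  assume "\<not> j \<le> i"
  then obtain d where d: "j = i + Suc d"
    by (metis add_Suc_right less_imp_Suc_add not_le)
  define w where "w = t * \<pi> ^ Suc d"
  have "(x * w) * \<pi> ^ i = u * \<pi> ^ i"
    using eq by (simp add: w_def d ac_simps power_add)
  then have xw: "x * w = u"
    using \<pi>(2) by simp
  have "\<pi> ^ Suc d \<in> p"
    using ideal_rmult[OF pI subring_power[OF R ideal_subset[OF pI, THEN subsetD, OF \<pi>(1)]] \<pi>(1)]
    by (simp add: power_Suc2)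
  then have "w \<in> p"
    unfolding w_def using ideal_lmult[OF pI tu(1)] by blast
  then have "u \<in> p"
    using integral_over_mult_mem_prime[OF R p x] xw tu(2) by metis
  then show False
    using tu(3) by blast
qed

lemma integral_over_locally_mem:
  assumes NR: "number_ring R" and p: "prime_ideal_in R p" and \<pi>: "\<pi> \<in> p" "\<pi> \<noteq> 0"
    and loc: "p \<subseteq> saturation R p (principal_ideal R \<pi>)"
    and a: "a \<in> R" and b: "b \<in> R" "b \<noteq> 0" and x: "integral_over R (a / b)"
  obtains t where "t \<in> R" "t \<notin> p" "t * (a / b) \<in> R"
proof (cases "a = 0")
  case True
  have R: "is_subring R"
    using NR by (rule number_ring_subring)
  then show ?thesis
    using that[of 1] True subring_1[OF R] subring_0[OF R] prime_ideal_one_notin[OF p] by simp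
next
  case False
  have R: "is_subring R" and pI: "ideal_in R p"
    using NR p by (simp_all add: number_ring_subring prime_ideal_ideal)
  have \<pi>R: "\<pi> \<in> R"
    using \<pi>(1) ideal_subset[OF pI] by blast
  obtain i r1 s1 where A: "r1 \<in> R" "s1 \<in> R" "r1 \<notin> p" "s1 \<notin> p" "s1 * a = \<pi> ^ i * r1"
    using saturation_valuation[OF NR p \<pi> loc a False] by metis
  obtain j r2 s2 where B: "r2 \<in> R" "s2 \<in> R" "r2 \<notin> p" "s2 \<notin> p" "s2 * b = \<pi> ^ j * r2"
    using saturation_valuation[OF NR p \<pi> loc b] by metis
  have "(s1 * r2) * (a / b) * \<pi> ^ j = s1 * (a / b) * (\<pi> ^ j * r2)"
    by (simp add: ac_simps)
  also have "\<dots> = s1 * (a / b) * (s2 * b)"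
    by (simp only: B(5))
  also have "\<dots> = (s2 * r1) * \<pi> ^ i"
    using b(2) A(5) by (simp add: ac_simps)
  finally have key: "(s1 * r2) * (a / b) * \<pi> ^ j = (s2 * r1) * \<pi> ^ i" .
  have units: "s1 * r2 \<in> R" "s2 * r1 \<in> R" "s1 * r2 \<notin> p" "s2 * r1 \<notin> p"
    using A B subring_mult[OF R] prime_ideal_mult_notin[OF p] by auto
  then have "j \<le> i"
    using integral_over_valuation_le[OF R p \<pi> x _ _ _ key] by blast
  then have "((s1 * r2) * (a / b)) * \<pi> ^ j = (s2 * r1 * \<pi> ^ (i - j)) * \<pi> ^ j"
    using key by (simp add: mult.assoc flip: power_add)
  then have "(s1 * r2) * (a / b) = s2 * r1 * \<pi> ^ (i - j)"
    using mult_right_cancel[OF power_not_zero[OF \<pi>(2)]] by blast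
  then show ?thesis
    using that[of "s1 * r2"] units subring_mult[OF R units(2) subring_power[OF R \<pi>R]] by simp
qed

lemma conductor_ideal:
  assumes R: "is_subring R"
  shows "ideal_in R {r \<in> R. r * x \<in> R}" (is "ideal_in R ?D")
  unfolding ideal_in_def[of R ?D]
proof (intro conjI ballI)
  show "?D \<subseteq> R" "0 \<in> ?D"
    using subring_0[OF R] by auto
  fix u v assume "u \<in> ?D" "v \<in> ?D"
  then show "u + v \<in> ?D" "- u \<in> ?D"
    using subring_add[OF R] subring_uminus[OF R] by (simp_all add: distrib_right)
next
  fix r u assume "r \<in> R" "u \<in> ?D"
  then show "r * u \<in> ?D"
    using subring_mult[OF R] by (simp add: mult.assoc)
qed

lemma number_ring_integral_over_locally_mem:
  assumes NR: "number_ring R" and p: "maximal_ideal_in R p" "p \<noteq> {0}"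
    and norm: "ideal_norm R (ideal_prod R p p) \<le> ideal_norm R p ^ 2"
    and a: "a \<in> R" and b: "b \<in> R" "b \<noteq> 0" and x: "integral_over R (a / b)"
  obtains t where "t \<in> R" "t \<notin> p" "t * (a / b) \<in> R"
proof -
  obtain \<pi> where \<pi>: "\<pi> \<in> p" "\<pi> \<noteq> 0" "p \<subseteq> ideal_gen R (insert \<pi> (ideal_prod R p p))"
    using maximal_ideal_principal_mod_square[OF NR p norm] by blast
  have "p \<subseteq> saturation R p (principal_ideal R \<pi>)"
    using saturation_principal_if_principal_mod_square[OF NR p(1) \<pi>(1,3)] .
  moreover have "prime_ideal_in R p"
    using maximal_ideal_prime[OF number_ring_subring[OF NR] p(1)] .
  ultimately obtain t where "t \<in> R" "t \<notin> p" "t * (a / b) \<in> R"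
    using integral_over_locally_mem[OF NR _ \<pi>(1,2) _ a b x] by blast
  then show ?thesis
    using that by blast
qed

lemma number_ring_integrally_closed:
  assumes NR: "number_ring R"
    and norm: "\<And>P. maximal_ideal_in R P \<Longrightarrow> P \<noteq> {0} \<Longrightarrow>
           ideal_norm R (ideal_prod R P P) \<le> (ideal_norm R P)^2"
  shows "integrally_closed R"
  unfolding integrally_closed_def
proof (intro allI impI)
  have R: "is_subring R"
    using NR by (rule number_ring_subring)
  fix x assume "(\<exists>a\<in>R. \<exists>b\<in>R. b \<noteq> 0 \<and> x = a / b) \<and> integral_over R x"
  then obtain a b where ab: "a \<in> R" "b \<in> R" "b \<noteq> 0" "x = a / b" and int: "integral_over R (a / b)"
    by blast
  define D where "D = {r \<in> R. r * x \<in> R}"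
  have D: "ideal_in R D"
    unfolding D_def using conductor_ideal[OF R] .
  have "b \<in> D"
    unfolding D_def using ab by simp
  show "x \<in> R"
  proof (rule ccontr)
    assume "x \<notin> R"
    then have "1 \<notin> D"
      unfolding D_def by simp
    then have "D \<noteq> R"
      using subring_1[OF R] by blast
    moreover have "D \<noteq> {0}"
      using \<open>b \<in> D\<close> ab(3) by blast
    ultimately obtain p where p: "maximal_ideal_in R p" "D \<subseteq> p"
      using number_ring_maximal_ideal_above[OF NR D] by blast
    then have "p \<noteq> {0}"
      using \<open>b \<in> D\<close> ab(3) by blast
    then obtain t where "t \<in> R" "t \<notin> p" "t * (a / b) \<in> R"
      using number_ring_integral_over_locally_mem[OF NR p(1) _ norm[OF p(1)] ab(1-3) int] by blast
    then have "t \<in> D" "t \<notin> p"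
      unfolding D_def using ab(4) by simp_all
    then show False
      using p(2) by blast
  qed
qed

theorem corollary2p8:
  fixes R :: "'a::field_char_0 set"
  assumes "number_ring R"
    and "\<And>P. maximal_ideal_in R P \<Longrightarrow> P \<noteq> {0} \<Longrightarrow>
           ideal_norm R (ideal_prod R P P) \<le> (ideal_norm R P)^2"
  shows "dedekind_domain R"
  unfolding dedekind_domain_def
proof (intro conjI allI impI)
  show "is_subring R" "noetherian_ring R" "integrally_closed R"
    using number_ring_subring[OF assms(1)] number_ring_noetherian[OF assms(1)]
      number_ring_integrally_closed[OF assms] .
  fix P assume "prime_ideal_in R P \<and> P \<noteq> {0}"
  then show "maximal_ideal_in R P"
    using number_ring_prime_ideal_maximal[OF assms(1)] by blast
qed

end
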